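(* Let $p\ge1$ and let $\bm A\in\mathbb{R}^{m\times d}$, $\bm B\in\mathbb{R}^{n\times d}$ be finite sequences of vectors with rows $\bm a_i$, $\bm b_j$. Then \[\Big\|\sum_{i=1}^m\bm a_i-\sum_{j=1}^n\bm b_j\Big\|_p\le d^p_{\mathrm{ERP}}(\bm A,\bm B).\]
   Context: The ERP distance is defined recursively: $d^p_{\mathrm{ERP}}(\bm A,\emptyset)=\sum_{i=1}^m\|\bm a_i\|_p$, $d^p_{\mathrm{ERP}}(\emptyset,\bm B)=\sum_{i=1}^n\|\bm b_i\|_p$, and otherwise $d^p_{\mathrm{ERP}}(\bm A,\bm B)=\min\{\|\bm a_1\|_p+d^p_{\mathrm{ERP}}(\bm A_{2:},\bm B),\ \|\bm b_1\|_p+d^p_{\mathrm{ERP}}(\bm A,\bm B_{2:}),\ \|\bm a_1-\bm b_1\|_p+d^p_{\mathrm{ERP}}(\bm A_{2:},\bm B_{2:})\}$, where $\emptyset$ is the empty sequence and $\bm A_{2:}$ removes the first row. *)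

theory Defs
  imports "HOL-Analysis.Analysis"
begin

definition pnorm :: "real \<Rightarrow> real ^ 'd \<Rightarrow> real" where
  "pnorm p x = (\<Sum>i\<in>UNIV. \<bar>x $ i\<bar> powr p) powr (1 / p)"

fun erp :: "real \<Rightarrow> (real ^ 'd) list \<Rightarrow> (real ^ 'd) list \<Rightarrow> real" where
  "erp p A [] = (\<Sum>a\<leftarrow>A. pnorm p a)"
| "erp p [] B = (\<Sum>b\<leftarrow>B. pnorm p b)"
| "erp p (a # A) (b # B) =
     min (pnorm p a + erp p A (b # B))
       (min (pnorm p b + erp p (a # A) B)
            (pnorm p (a - b) + erp p A B))"

end

theory Submission
  imports Defs
begin

text \<open>Each deletion, insertion or substitution in an ERP alignment changes the difference of the
  two running sums by exactly the vector whose norm it is charged, so the bound follows from the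
  triangle inequality for the l_p norm along the recursion. Minkowski's inequality in turn holds
  because the l_p unit ball is convex, t \<mapsto> |t| powr p being convex for p \<ge> 1.\<close>

lemma powr_convex_nonneg:
  assumes "p \<ge> 1"
  shows "convex_on {0..} (\<lambda>x::real. x powr p)"
proof (rule convex_onI)
  fix t x y :: real
  assume t: "0 < t" "t < 1" and xy: "x \<in> {0..}" "y \<in> {0..}"
  have scaled_le: "(s * z) powr p \<le> s * z powr p" if "0 < s" "s < 1" "z \<ge> 0" for s z :: real
    using that assms powr_le_one_le[of s p] by (simp add: powr_mult mult_right_mono)
  consider "x = 0" | "y = 0" | "x > 0" "y > 0"
    using xy by fastforce
  then show "((1 - t) *\<^sub>R x + t *\<^sub>R y) powr p \<le> (1 - t) * x powr p + t * y powr p"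
  proof cases
    case 1
    then show ?thesis using t xy scaled_le[of t y] by simp
  next
    case 2
    then show ?thesis using t xy scaled_le[of "1 - t" x] by simp
  next
    case 3
    then show ?thesis using convex_onD[OF powr_convex[OF assms], of t x y] t by simp
  qed
qed simp

lemma convex_on_abs_powr:
  assumes "p \<ge> 1"
  shows "convex_on UNIV (\<lambda>x::real. \<bar>x\<bar> powr p)"
proof (rule convex_onI)
  fix t x y :: real
  assume t: "0 < t" "t < 1"
  have "\<bar>(1 - t) *\<^sub>R x + t *\<^sub>R y\<bar> powr p \<le> ((1 - t) * \<bar>x\<bar> + t * \<bar>y\<bar>) powr p"
    using t assms by (intro powr_mono2) (auto simp: abs_triangle_ineq abs_mult
        intro: order_trans[OF abs_triangle_ineq])
  also have "\<dots> \<le> (1 - t) * \<bar>x\<bar> powr p + t * \<bar>y\<bar> powr p"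
    using convex_onD[OF powr_convex_nonneg[OF assms], of t "\<bar>x\<bar>" "\<bar>y\<bar>"] t by simp
  finally show "\<bar>(1 - t) *\<^sub>R x + t *\<^sub>R y\<bar> powr p \<le> (1 - t) * \<bar>x\<bar> powr p + t * \<bar>y\<bar> powr p" .
qed simp

lemma convex_on_compose_linear:
  assumes "linear g" "convex_on UNIV f"
  shows "convex_on UNIV (\<lambda>x. f (g x))"
proof (rule convex_onI)
  fix t :: real and x y
  assume "0 < t" "t < 1"
  then show "f (g ((1 - t) *\<^sub>R x + t *\<^sub>R y)) \<le> (1 - t) * f (g x) + t * f (g y)"
    using convex_onD[OF assms(2), of t "g x" "g y"] by (simp add: linear_add linear_scale assms(1))
qed simp

lemma convex_on_sum_fun:
  assumes "finite I" "convex S" "\<And>i. i \<in> I \<Longrightarrow> convex_on S (f i)"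
  shows "convex_on S (\<lambda>x. \<Sum>i\<in>I. f i x)"
  using assms by (induction I rule: finite_induct) (auto simp: convex_on_const)

lemma convex_sublevel_set:
  assumes "convex_on S f"
  shows "convex {x\<in>S. f x \<le> c}"
  unfolding convex_def
proof safe
  fix x y and u v :: real
  assume "x \<in> S" "f x \<le> c" "y \<in> S" "f y \<le> c" "0 \<le> u" "0 \<le> v" "u + v = 1"
  then show "u *\<^sub>R x + v *\<^sub>R y \<in> S" "f (u *\<^sub>R x + v *\<^sub>R y) \<le> c"
    using convex_lower[OF assms, of x y u v] convex_on_imp_convex[OF assms]
    by (auto simp: convex_def)
qed

text \<open>Scaling by N x + e/2 and N y + e/2 rather than by N x and N y avoids the degenerate
  case N x = 0.\<close>
lemma subadditive_if_convex_unit_ball: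
  fixes N :: "'a::real_vector \<Rightarrow> real"
  assumes nonneg: "\<And>x. N x \<ge> 0"
    and homogeneous: "\<And>c x. c > 0 \<Longrightarrow> N (c *\<^sub>R x) = c * N x"
    and convex_ball: "convex {x. N x \<le> 1}"
  shows "N (x + y) \<le> N x + N y"
proof (rule field_le_epsilon)
  fix e :: real
  assume "e > 0"
  define a b where "a = N x + e / 2" and "b = N y + e / 2"
  have a: "a > 0" and b: "b > 0"
    using \<open>e > 0\<close> nonneg by (auto simp: a_def b_def add_nonneg_pos)
  have "N (inverse a *\<^sub>R x) \<le> 1" "N (inverse b *\<^sub>R y) \<le> 1"
    using a b \<open>e > 0\<close> homogeneous by (auto simp: a_def b_def field_simps)
  then have "(a / (a + b)) *\<^sub>R (inverse a *\<^sub>R x) + (b / (a + b)) *\<^sub>R (inverse b *\<^sub>R y)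
      \<in> {x. N x \<le> 1}"
    using a b by (intro convexD[OF convex_ball]) (auto simp: add_divide_distrib[symmetric])
  then have "N ((a / (a + b)) *\<^sub>R (inverse a *\<^sub>R x) + (b / (a + b)) *\<^sub>R (inverse b *\<^sub>R y)) \<le> 1"
    by simp
  also have "(a / (a + b)) *\<^sub>R (inverse a *\<^sub>R x) + (b / (a + b)) *\<^sub>R (inverse b *\<^sub>R y)
      = inverse (a + b) *\<^sub>R (x + y)"
    using a b by (simp add: scaleR_add_right field_simps)
  finally have "N (inverse (a + b) *\<^sub>R (x + y)) \<le> 1" .
  moreover have "N (inverse (a + b) *\<^sub>R (x + y)) = N (x + y) / (a + b)"
    using a b by (simp add: homogeneous divide_inverse mult.commute)
  ultimately have "N (x + y) \<le> a + b"
    using a b by simp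
  then show "N (x + y) \<le> N x + N y + e"
    by (simp add: a_def b_def)
qed

lemma pnorm_nonneg: "pnorm p x \<ge> 0"
  by (simp add: pnorm_def)

lemma pnorm_scaleR:
  assumes "p > 0"
  shows "pnorm p (c *\<^sub>R x) = \<bar>c\<bar> * pnorm p x"
proof -
  have "(\<Sum>i\<in>UNIV. \<bar>(c *\<^sub>R x) $ i\<bar> powr p) = \<bar>c\<bar> powr p * (\<Sum>i\<in>UNIV. \<bar>x $ i\<bar> powr p)"
    by (simp add: abs_mult powr_mult sum_distrib_left)
  then show ?thesis
    using assms by (simp add: pnorm_def powr_mult powr_powr sum_nonneg)
qed

lemma pnorm_uminus: "pnorm p (- x) = pnorm p x"
  by (simp add: pnorm_def)

lemma convex_pnorm_unit_ball:
  assumes "p \<ge> 1"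
  shows "convex {x :: real ^ 'd. pnorm p x \<le> 1}"
proof -
  have "1 / p > 0"
    using assms by simp
  then have root_le_one_iff: "s powr (1 / p) \<le> 1 \<longleftrightarrow> s \<le> 1" if "s \<ge> 0" for s :: real
    using that powr_le1[OF less_imp_le, of "1 / p" s] gr_one_powr[of s "1 / p"] by (smt (verit))
  have unit_ball_eq: "{x. pnorm p x \<le> 1} = {x \<in> UNIV. (\<Sum>i\<in>UNIV. \<bar>x $ i\<bar> powr p) \<le> 1}"
    unfolding pnorm_def by (simp add: root_le_one_iff sum_nonneg)
  have "convex_on UNIV (\<lambda>x :: real ^ 'd. \<Sum>i\<in>UNIV. \<bar>x $ i\<bar> powr p)"
  proof (rule convex_on_sum_fun)
    show "convex_on UNIV (\<lambda>x. \<bar>x $ i\<bar> powr p)" for i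
      using convex_on_compose_linear[OF bounded_linear.linear[OF bounded_linear_vec_nth]
          convex_on_abs_powr[OF assms]] .
  qed simp_all
  then show ?thesis
    unfolding unit_ball_eq by (rule convex_sublevel_set)
qed

lemma pnorm_triangle:
  assumes "p \<ge> 1"
  shows "pnorm p (x + y) \<le> pnorm p x + pnorm p y"
  using assms
  by (intro subadditive_if_convex_unit_ball pnorm_nonneg convex_pnorm_unit_ball) (simp_all add: pnorm_scaleR)

lemma pnorm_add_le:
  assumes "p \<ge> 1" "pnorm p y \<le> r"
  shows "pnorm p (x + y) \<le> pnorm p x + r"
  using pnorm_triangle[OF assms(1), of x y] assms(2) by simp

lemma pnorm_sum_list_le:
  assumes "p \<ge> 1"
  shows "pnorm p (sum_list xs) \<le> (\<Sum>x\<leftarrow>xs. pnorm p x)"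
proof (induction xs)
  case Nil
  then show ?case
    using assms by (simp add: pnorm_def)
next
  case (Cons x xs)
  then show ?case
    using pnorm_triangle[OF assms, of x "sum_list xs"] by simp
qed

theorem lemma2:
  fixes p :: real and A B :: "(real ^ 'd) list"
  assumes "p \<ge> 1"
  shows "pnorm p (sum_list A - sum_list B) \<le> erp p A B"
  using assms
proof (induction p A B rule: erp.induct)
  case (1 p A)
  then show ?case
    using pnorm_sum_list_le by simp
next
  case (2 p b B)
  then show ?case
    using pnorm_sum_list_le[of p "b # B"] by (simp only: pnorm_uminus erp.simps diff_0 sum_list.Nil)
next
  case (3 p a A b B)
  then have p: "p \<ge> 1" by simp
  have "pnorm p (a + (sum_list A - sum_list (b # B))) \<le> pnorm p a + erp p A (b # B)"
    using p "3.IH"(1)[OF p] by (rule pnorm_add_le)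
  moreover have "pnorm p (- b + (sum_list (a # A) - sum_list B)) \<le> pnorm p b + erp p (a # A) B"
    using pnorm_add_le[OF p "3.IH"(2)[OF p], of "- b"] by (simp only: pnorm_uminus)
  moreover have "pnorm p ((a - b) + (sum_list A - sum_list B)) \<le> pnorm p (a - b) + erp p A B"
    using p "3.IH"(3)[OF p] by (rule pnorm_add_le)
  ultimately show ?case
    by (simp add: algebra_simps)
qed

end
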